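(* Let $N,n_h,n_l$ be positive integers, $r\in\mathbb{R}^N$, and $R\in\mathbb{R}^{N\times n_h}$ with $R_{t,k}=r_{t-k+1}$ for $t\ge k$ and $R_{t,k}=0$ otherwise; assume $R^\top R$ is invertible. Let $\sigma^2>0$, $E:=R(R^\top R)^{-2}R^\top$ and $c:=\mathrm{tr}(\sigma^2(R^\top R)^{-1})$. For $l=(l_0,\dots,l_{n_l-1})^\top$ let $L(l)\in\mathbb{R}^{N\times(N+n_l-1)}$ have entries $L_{t,s}=l_{t+n_l-1-s}$ if $0\le t+n_l-1-s\le n_l-1$ and $0$ otherwise, let $Q_l$ be the $0/1$ selection matrix with $\mathrm{vec}(L(l))=Q_l l$ (column stacking), and set $M:=Q_l^\top(I_{N+n_l-1}\otimes E)Q_l$. Let $\gamma_2>0$, let $\lambda_1\ge\lambda_2\ge\dots\ge\lambda_{n_l}\ge0$ be the eigenvalues of $M$ and $v_1$ a unit-norm eigenvector for $\lambda_1$. Then a minimizer over $l\in\mathbb{R}^{n_l}$ of $(l^\top M l+c)^{-1}+\gamma_2\|l\|^2$ is $l^*=0$ if $\lambda_1\le\gamma_2c^2$, and $l^*=\sqrt{1/\sqrt{\gamma_2\lambda_1}-c/\lambda_1}\;v_1$ otherwise.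
   Context: $\otimes$ is the Kronecker product and $\|\cdot\|$ the Euclidean norm. $\gamma_2$ weights output-variance degradation against the (inverse) identification error. *)

theory Defs
  imports "Jordan_Normal_Form.Char_Poly" "Jordan_Normal_Form.Gauss_Jordan_Elimination"
begin

definition mtrace :: "real mat \<Rightarrow> real" where
  "mtrace A = (\<Sum>i<dim_row A. A $$ (i, i))"

definition minv :: "real mat \<Rightarrow> real mat" where
  "minv A = the (mat_inverse A)"

definition kron :: "real mat \<Rightarrow> real mat \<Rightarrow> real mat" where
  "kron A B = mat (dim_row A * dim_row B) (dim_col A * dim_col B)
     (\<lambda>(i, j). A $$ (i div dim_row B, j div dim_col B) * B $$ (i mod dim_row B, j mod dim_col B))"

(* column-stacking vectorisation: entry (t,s) goes to position t + nrows * s *)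
definition vec_cs :: "real mat \<Rightarrow> real vec" where
  "vec_cs A = vec (dim_row A * dim_col A) (\<lambda>i. A $$ (i mod dim_row A, i div dim_row A))"

(* the regressor (Toeplitz) matrix R, 0-based: R_{t,k} = r_{t-k} for t \<ge> k *)
definition Rmat :: "nat \<Rightarrow> nat \<Rightarrow> real vec \<Rightarrow> real mat" where
  "Rmat N nh r = mat N nh (\<lambda>(t, k). if k \<le> t then r $ (t - k) else 0)"

definition Lmat :: "nat \<Rightarrow> nat \<Rightarrow> real vec \<Rightarrow> real mat" where
  "Lmat N nl l = mat N (N + nl - 1)
     (\<lambda>(t, s). if s \<le> t + nl - 1 \<and> t + nl - 1 - s \<le> nl - 1 then l $ (t + nl - 1 - s) else 0)"

definition Emat :: "nat \<Rightarrow> nat \<Rightarrow> real vec \<Rightarrow> real mat" where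
  "Emat N nh r = (let R = Rmat N nh r; G = minv (transpose_mat R * R)
                  in R * (G * G) * transpose_mat R)"

definition Mmat :: "nat \<Rightarrow> nat \<Rightarrow> nat \<Rightarrow> real vec \<Rightarrow> real mat \<Rightarrow> real mat" where
  "Mmat N nh nl r Q = transpose_mat Q * kron (1\<^sub>m (N + nl - 1)) (Emat N nh r) * Q"

end

theory Submission
  imports Defs "HOL-Analysis.Function_Topology"
begin

(* M = Q^T (I (x) E) Q is a Gram matrix D D^T with D = Q^T (I (x) B) and B = R (R^T R)^-1, so it is
   symmetric positive semidefinite, and c = sigma^2 tr ((R^T R)^-1) = sigma^2 tr (B^T B) is positive.
   Maximising l^T M l over the compact unit sphere yields an eigenvector, hence the Rayleigh bound
   l^T M l <= lambda_1 |l|^2. The objective at l is therefore at least phi (|l|^2) with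
   phi x = 1 / (lambda_1 x + c) + gamma_2 x, while the candidate l* has |l*|^2 equal to the minimiser of
   phi on x >= 0 and attains that value: the minimiser is 0 if lambda_1 <= gamma_2 c^2 and the stationary
   point of phi otherwise. *)

section \<open>Rayleigh bound for symmetric quadratic forms\<close>

definition qform :: "(nat \<Rightarrow> nat \<Rightarrow> real) \<Rightarrow> nat \<Rightarrow> (nat \<Rightarrow> real) \<Rightarrow> real" where
  "qform m n x = (\<Sum>i<n. \<Sum>j<n. m i j * x i * x j)"

definition sqnorm :: "nat \<Rightarrow> (nat \<Rightarrow> real) \<Rightarrow> real" where
  "sqnorm n x = (\<Sum>i<n. (x i)\<^sup>2)"

lemma sqnorm_nonneg: "0 \<le> sqnorm n x"
  unfolding sqnorm_def by (intro sum_nonneg) auto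

lemma sqnorm_eq_0_iff: "sqnorm n x = 0 \<longleftrightarrow> (\<forall>i<n. x i = 0)"
  unfolding sqnorm_def by (subst sum_nonneg_eq_0_iff) auto

lemma sqnorm_scale: "sqnorm n (\<lambda>i. t * x i) = t\<^sup>2 * sqnorm n x"
  unfolding sqnorm_def by (simp add: power_mult_distrib sum_distrib_left)

lemma qform_scale: "qform m n (\<lambda>i. t * x i) = t\<^sup>2 * qform m n x"
  unfolding qform_def by (simp add: power2_eq_square sum_distrib_left mult_ac)

lemma continuous_on_component [continuous_intros]:
  "continuous_on S (\<lambda>x::nat \<Rightarrow> real. x i)"
  by (rule continuous_on_subset[OF continuous_on_product_coordinates]) simp

lemma compact_unit_cube: "compact {x::nat \<Rightarrow> real. \<forall>i. x i \<in> {-1..1}}"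
proof -
  have "{x::nat \<Rightarrow> real. \<forall>i. x i \<in> {-1..1}} = PiE UNIV (\<lambda>_. {-1..1})"
    by (auto simp: PiE_def Pi_def extensional_def)
  moreover have "compactin (product_topology (\<lambda>_. euclidean) UNIV) (PiE UNIV (\<lambda>_::nat. {-1..1::real}))"
    by (subst compactin_PiE) (auto simp: compactin_euclidean_iff)
  ultimately show ?thesis unfolding euclidean_product_topology compactin_euclidean_iff by simp
qed

text \<open>Only the first \<open>n\<close> coordinates matter, so the unit sphere may be cut down to the compact
  set of its points vanishing beyond \<open>n\<close>.\<close>

lemma qform_attains_max_on_sphere:
  assumes "n > 0"
  obtains x0 where "sqnorm n x0 = 1" "\<And>x. sqnorm n x = 1 \<Longrightarrow> qform m n x \<le> qform m n x0"
proof -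
  let ?S = "{x::nat \<Rightarrow> real. \<forall>i. x i \<in> {-1..1}} \<inter> {x. sqnorm n x = 1}"
  have "closed {x::nat \<Rightarrow> real. sqnorm n x = 1}"
    unfolding sqnorm_def by (intro closed_Collect_eq continuous_intros)
  with compact_unit_cube have compact: "compact ?S" by (rule compact_Int_closed)
  have "(\<lambda>i. if i = 0 then 1 else 0) \<in> ?S"
    using assms by (auto simp: sqnorm_def power2_eq_square if_distrib cong: if_cong)
  then have nonempty: "?S \<noteq> {}" by (subst ex_in_conv[symmetric]) (rule exI)
  have "continuous_on ?S (qform m n)"
    unfolding qform_def by (intro continuous_intros)
  from continuous_attains_sup[OF compact nonempty this]
  obtain x0 where x0: "x0 \<in> ?S" and max: "\<And>y. y \<in> ?S \<Longrightarrow> qform m n y \<le> qform m n x0"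
    by blast
  show thesis
  proof (rule that)
    show "sqnorm n x0 = 1" using x0 by simp
    fix x assume x: "sqnorm n x = 1"
    define y where "y i = (if i < n then x i else 0)" for i
    have sy: "sqnorm n y = 1" using x unfolding y_def sqnorm_def by simp
    have "y i \<in> {-1..1}" for i
    proof (cases "i < n")
      case True
      have "(y i)\<^sup>2 \<le> sqnorm n y"
        unfolding sqnorm_def using True by (intro member_le_sum) auto
      then have "\<bar>y i\<bar> \<le> 1" using sy by (simp add: abs_square_le_1)
      then show ?thesis by (simp add: abs_le_iff)
    qed (simp add: y_def)
    then have "qform m n y \<le> qform m n x0" using sy by (intro max) auto
    moreover have "qform m n y = qform m n x" unfolding y_def qform_def by simp
    ultimately show "qform m n x \<le> qform m n x0" by simp
  qed
qed

lemma qform_le_of_sphere_bound: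
  assumes bound: "\<And>x. sqnorm n x = 1 \<Longrightarrow> qform m n x \<le> mu"
  shows "qform m n y \<le> mu * sqnorm n y"
proof (cases "sqnorm n y = 0")
  case True
  then have "qform m n y = 0" unfolding sqnorm_eq_0_iff qform_def by simp
  then show ?thesis using True by simp
next
  case False
  define t where "t = sqrt (sqnorm n y)"
  have t: "t > 0" "t\<^sup>2 = sqnorm n y"
    unfolding t_def using False sqnorm_nonneg[of n y] by auto
  let ?z = "\<lambda>i. (1 / t) * y i"
  have "sqnorm n ?z = (1 / t)\<^sup>2 * sqnorm n y" by (rule sqnorm_scale)
  also have "\<dots> = 1" using t False by (simp add: power_divide)
  finally have "sqnorm n ?z = 1" .
  then have "qform m n ?z \<le> mu" by (rule bound)
  then have "t\<^sup>2 * qform m n ?z \<le> t\<^sup>2 * mu" by (simp add: mult_left_mono)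
  moreover have "t\<^sup>2 * qform m n ?z = qform m n y"
    unfolding qform_scale using t(1) by (simp add: power_divide)
  ultimately show ?thesis using t by (simp add: mult.commute)
qed

lemma mu_sqnorm_minus_qform_add_scaled:
  assumes sym: "\<And>i j. i < n \<Longrightarrow> j < n \<Longrightarrow> m i j = m j i"
  shows "mu * sqnorm n (\<lambda>i. x i + t * d i) - qform m n (\<lambda>i. x i + t * d i)
    = (mu * sqnorm n x - qform m n x) + 2 * t * (\<Sum>i<n. d i * (mu * x i - (\<Sum>j<n. m i j * x j)))
      + t\<^sup>2 * (mu * sqnorm n d - qform m n d)"
proof -
  have swap: "(\<Sum>i<n. \<Sum>j<n. m i j * x i * d j) = (\<Sum>i<n. \<Sum>j<n. m i j * d i * x j)"
    by (subst sum.swap) (intro sum.cong refl, simp add: sym)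
  have q: "qform m n (\<lambda>i. x i + t * d i) = qform m n x
      + t * ((\<Sum>i<n. \<Sum>j<n. m i j * x i * d j) + (\<Sum>i<n. \<Sum>j<n. m i j * d i * x j))
      + t\<^sup>2 * qform m n d"
    unfolding qform_def
    by (simp add: power2_eq_square algebra_simps sum.distrib sum_distrib_left)
  have s: "sqnorm n (\<lambda>i. x i + t * d i) = sqnorm n x + 2 * t * (\<Sum>i<n. x i * d i) + t\<^sup>2 * sqnorm n d"
    unfolding sqnorm_def
    by (simp add: power2_eq_square algebra_simps sum.distrib sum_distrib_left)
  have mid: "(\<Sum>i<n. d i * (mu * x i - (\<Sum>j<n. m i j * x j)))
      = mu * (\<Sum>i<n. x i * d i) - (\<Sum>i<n. \<Sum>j<n. m i j * d i * x j)"
    by (simp add: sum_distrib_left sum_subtractf algebra_simps)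
  show ?thesis unfolding q s mid swap by (simp add: algebra_simps)
qed

lemma nonneg_quadratic_linear_coeff_eq_0:
  fixes a b :: real
  assumes "\<And>t. 0 \<le> a * t + b * t\<^sup>2"
  shows "a = 0"
proof (rule ccontr)
  assume "a \<noteq> 0"
  define t where "t = - a / (\<bar>b\<bar> + 1)"
  have "b * t\<^sup>2 = (b / (\<bar>b\<bar> + 1)) * a\<^sup>2 / (\<bar>b\<bar> + 1)"
    unfolding t_def by (simp add: power2_eq_square field_simps)
  also have "\<dots> < a\<^sup>2 / (\<bar>b\<bar> + 1)"
  proof (intro divide_strict_right_mono)
    have "b / (\<bar>b\<bar> + 1) < 1" by (simp add: field_simps)
    then have "b / (\<bar>b\<bar> + 1) * a\<^sup>2 < 1 * a\<^sup>2"
      using \<open>a \<noteq> 0\<close> by (intro mult_strict_right_mono) auto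
    then show "b / (\<bar>b\<bar> + 1) * a\<^sup>2 < a\<^sup>2" by (simp only: mult_1)
  qed simp
  also have "\<dots> = - (a * t)" unfolding t_def by (simp add: power2_eq_square)
  finally show False using assms[of t] by simp
qed

text \<open>First-order optimality: \<open>F y = \<mu> \<parallel>y\<parallel>\<^sup>2 - q y\<close> is nonnegative and vanishes at \<open>x0\<close>, and along
  \<open>x0 + t d\<close> with \<open>d = \<mu> x0 - m x0\<close> it equals \<open>2 t \<parallel>d\<parallel>\<^sup>2 + t\<^sup>2 F d\<close>, which forces \<open>d = 0\<close>.\<close>

lemma sphere_maximizer_is_eigenvector:
  assumes sym: "\<And>i j. i < n \<Longrightarrow> j < n \<Longrightarrow> m i j = m j i"
    and x0: "sqnorm n x0 = 1" and max: "\<And>x. sqnorm n x = 1 \<Longrightarrow> qform m n x \<le> qform m n x0"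
    and i: "i < n"
  shows "(\<Sum>j<n. m i j * x0 j) = qform m n x0 * x0 i"
proof -
  define mu where "mu = qform m n x0"
  define F where "F y = mu * sqnorm n y - qform m n y" for y
  define d where "d i = mu * x0 i - (\<Sum>j<n. m i j * x0 j)" for i
  have F_nonneg: "0 \<le> F y" for y
    using qform_le_of_sphere_bound[of n m mu y] max unfolding F_def mu_def by simp
  have "F x0 = 0" unfolding F_def mu_def using x0 by simp
  moreover have "(\<Sum>i<n. d i * (mu * x0 i - (\<Sum>j<n. m i j * x0 j))) = sqnorm n d"
    unfolding sqnorm_def d_def by (simp add: power2_eq_square)
  ultimately have "F (\<lambda>i. x0 i + t * d i) = 2 * sqnorm n d * t + F d * t\<^sup>2" for t
    using mu_sqnorm_minus_qform_add_scaled[where m = m and n = n and mu = mu and x = x0 and t = t and d = d]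
      sym unfolding F_def by (simp add: mult_ac)
  then have "2 * sqnorm n d = 0"
    using F_nonneg by (intro nonneg_quadratic_linear_coeff_eq_0[of _ "F d"]) metis
  then have "sqnorm n d = 0" by simp
  then show ?thesis using i unfolding sqnorm_eq_0_iff d_def mu_def by simp
qed

lemma qform_le_max_eigenvalue:
  assumes sym: "\<And>i j. i < n \<Longrightarrow> j < n \<Longrightarrow> m i j = m j i"
    and max_ev: "\<And>mu x. sqnorm n x = 1 \<Longrightarrow> (\<And>i. i < n \<Longrightarrow> (\<Sum>j<n. m i j * x j) = mu * x i) \<Longrightarrow> mu \<le> lam"
  shows "qform m n y \<le> lam * sqnorm n y"
proof (cases "n = 0")
  case True
  then show ?thesis by (simp add: qform_def sqnorm_def)
next
  case False
  then obtain x0 where x0: "sqnorm n x0 = 1" and max: "\<And>x. sqnorm n x = 1 \<Longrightarrow> qform m n x \<le> qform m n x0"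
    using qform_attains_max_on_sphere by blast
  have "qform m n x0 \<le> lam"
    using sphere_maximizer_is_eigenvector[OF sym x0 max] by (intro max_ev[OF x0]) auto
  then have "qform m n y \<le> qform m n x0 * sqnorm n y"
    using qform_le_of_sphere_bound max by blast
  also have "\<dots> \<le> lam * sqnorm n y"
    using \<open>qform m n x0 \<le> lam\<close> sqnorm_nonneg by (rule mult_right_mono)
  finally show ?thesis .
qed

lemma quadratic_form_eq_qform:
  fixes A :: "real mat"
  assumes "A \<in> carrier_mat n n" "x \<in> carrier_vec n"
  shows "x \<bullet> (A *\<^sub>v x) = qform (\<lambda>i j. A $$ (i, j)) n (\<lambda>i. x $ i)"
  using assms
  by (simp add: qform_def scalar_prod_def row_def lessThan_atLeast0 sum_distrib_left algebra_simps)

lemma scalar_prod_self_eq_sqnorm: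
  fixes x :: "real vec"
  assumes "x \<in> carrier_vec n"
  shows "x \<bullet> x = sqnorm n (\<lambda>i. x $ i)"
  using assms by (simp add: sqnorm_def scalar_prod_def lessThan_atLeast0 power2_eq_square)

lemma quadratic_form_le_max_eigenvalue:
  fixes A :: "real mat"
  assumes A: "A \<in> carrier_mat n n" and sym: "transpose_mat A = A"
    and max_ev: "\<And>mu. eigenvalue A mu \<Longrightarrow> mu \<le> lam"
    and x: "x \<in> carrier_vec n"
  shows "x \<bullet> (A *\<^sub>v x) \<le> lam * (x \<bullet> x)"
proof -
  have "qform (\<lambda>i j. A $$ (i, j)) n (\<lambda>i. x $ i) \<le> lam * sqnorm n (\<lambda>i. x $ i)"
  proof (rule qform_le_max_eigenvalue)
    fix i j assume "i < n" "j < n"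
    then show "A $$ (i, j) = A $$ (j, i)" using A by (metis index_transpose_mat(1) carrier_matD sym)
  next
    fix mu and z :: "nat \<Rightarrow> real"
    assume z: "sqnorm n z = 1" and ev: "\<And>i. i < n \<Longrightarrow> (\<Sum>j<n. A $$ (i, j) * z j) = mu * z i"
    have v: "vec n z \<in> carrier_vec n" by simp
    have "vec n z \<noteq> 0\<^sub>v n"
    proof
      assume "vec n z = 0\<^sub>v n"
      then have "\<forall>i<n. z i = 0" by (metis index_vec index_zero_vec(1))
      then have "sqnorm n z = 0" by (simp add: sqnorm_eq_0_iff)
      with z show False by simp
    qed
    moreover have "A *\<^sub>v vec n z = mu \<cdot>\<^sub>v vec n z"
      using A ev by (intro eq_vecI) (auto simp: scalar_prod_def row_def lessThan_atLeast0)
    ultimately have "eigenvalue A mu" unfolding eigenvalue_def eigenvector_def using A v by blast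
    then show "mu \<le> lam" by (rule max_ev)
  qed
  then show ?thesis using quadratic_form_eq_qform[OF A x] scalar_prod_self_eq_sqnorm[OF x] by simp
qed

section \<open>Kronecker products and Gram matrices\<close>

lemma div_mod_less_of_less_mult:
  fixes i a b :: nat
  assumes "i < a * b"
  shows "i div b < a" "i mod b < b"
proof -
  have "b > 0" using assms by (cases b) auto
  then show "i div b < a" "i mod b < b" using assms by (auto simp: less_mult_imp_div_less)
qed

lemma sum_lessThan_mult_div_mod:
  fixes f :: "nat \<Rightarrow> nat \<Rightarrow> 'a::comm_monoid_add"
  shows "(\<Sum>s<a * b. f (s div b) (s mod b)) = (\<Sum>k<a. \<Sum>t<b. f k t)"
proof -
  have "(\<Sum>s<a * b. f (s div b) (s mod b)) = (\<Sum>(k, t)\<in>{..<a} \<times> {..<b}. f k t)"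
  proof (rule sum.reindex_bij_witness[where i = "\<lambda>(k, t). k * b + t" and j = "\<lambda>s. (s div b, s mod b)"])
    fix s assume "s \<in> {..<a * b}"
    then show "(s div b, s mod b) \<in> {..<a} \<times> {..<b}"
      by (auto simp: div_mod_less_of_less_mult)
  next
    fix kt :: "nat \<times> nat" assume "kt \<in> {..<a} \<times> {..<b}"
    moreover obtain k t where "kt = (k, t)" by fastforce
    ultimately have kt: "kt = (k, t)" "k < a" "t < b" by auto
    have "k * b + t < (k + 1) * b" using kt by simp
    also have "\<dots> \<le> a * b" using kt by (intro mult_right_mono) auto
    finally show "(case kt of (k, t) \<Rightarrow> k * b + t) \<in> {..<a * b}" using kt by simp
  qed auto
  also have "\<dots> = (\<Sum>k<a. \<Sum>t<b. f k t)" by (rule sum.cartesian_product[symmetric])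
  finally show ?thesis .
qed

lemma kron_carrier_mat[simp]:
  "A \<in> carrier_mat a1 a2 \<Longrightarrow> B \<in> carrier_mat b1 b2 \<Longrightarrow> kron A B \<in> carrier_mat (a1 * b1) (a2 * b2)"
  unfolding kron_def by auto

lemma index_kron:
  assumes "A \<in> carrier_mat a1 a2" "B \<in> carrier_mat b1 b2" "i < a1 * b1" "j < a2 * b2"
  shows "kron A B $$ (i, j) = A $$ (i div b1, j div b2) * B $$ (i mod b1, j mod b2)"
  using assms unfolding kron_def by auto

lemma transpose_kron:
  assumes "A \<in> carrier_mat a1 a2" "B \<in> carrier_mat b1 b2"
  shows "transpose_mat (kron A B) = kron (transpose_mat A) (transpose_mat B)"
proof (rule eq_matI)
  fix i j assume "i < dim_row (kron (transpose_mat A) (transpose_mat B))"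
    "j < dim_col (kron (transpose_mat A) (transpose_mat B))"
  then have "i < a2 * b2" "j < a1 * b1" using assms unfolding kron_def by auto
  moreover have "i div b2 < a2" "j div b1 < a1" "i mod b2 < b2" "j mod b1 < b1"
    using calculation by (auto simp: div_mod_less_of_less_mult)
  ultimately have "transpose_mat (kron A B) $$ (i, j) = A $$ (j div b1, i div b2) * B $$ (j mod b1, i mod b2)"
    using assms by (simp add: index_kron[OF assms] kron_carrier_mat[OF assms, THEN carrier_matD(1)]
        kron_carrier_mat[OF assms, THEN carrier_matD(2)])
  also have "\<dots> = kron (transpose_mat A) (transpose_mat B) $$ (i, j)"
    using assms \<open>i < a2 * b2\<close> \<open>j < a1 * b1\<close> \<open>i div b2 < a2\<close> \<open>j div b1 < a1\<close>
      \<open>i mod b2 < b2\<close> \<open>j mod b1 < b1\<close>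
    by (subst index_kron[of _ a2 a1 _ b2 b1]) auto
  finally show "transpose_mat (kron A B) $$ (i, j) = kron (transpose_mat A) (transpose_mat B) $$ (i, j)" .
qed (use assms in \<open>auto simp: kron_def\<close>)

lemma kron_mult:
  assumes A: "A \<in> carrier_mat a1 a2" and B: "B \<in> carrier_mat b1 b2"
    and C: "C \<in> carrier_mat a2 a3" and D: "D \<in> carrier_mat b2 b3"
  shows "kron A B * kron C D = kron (A * C) (B * D)"
proof (rule eq_matI)
  fix i j assume "i < dim_row (kron (A * C) (B * D))" "j < dim_col (kron (A * C) (B * D))"
  then have ij: "i < a1 * b1" "j < a3 * b3" using A B C D by (auto simp: kron_def)
  then have lt: "i div b1 < a1" "j div b3 < a3" "i mod b1 < b1" "j mod b3 < b3"
    by (auto simp: div_mod_less_of_less_mult)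
  have AB: "kron A B \<in> carrier_mat (a1 * b1) (a2 * b2)" and CD: "kron C D \<in> carrier_mat (a2 * b2) (a3 * b3)"
    using A B C D by simp_all
  have "(kron A B * kron C D) $$ (i, j) = (\<Sum>s<a2 * b2. kron A B $$ (i, s) * kron C D $$ (s, j))"
    using AB CD ij by (simp add: scalar_prod_def lessThan_atLeast0)
  also have "\<dots> = (\<Sum>s<a2 * b2. (\<lambda>k t. A $$ (i div b1, k) * C $$ (k, j div b3)
      * (B $$ (i mod b1, t) * D $$ (t, j mod b3))) (s div b2) (s mod b2))"
    using A B C D ij by (intro sum.cong refl) (simp add: index_kron)
  also have "\<dots> = (\<Sum>k<a2. \<Sum>t<b2. A $$ (i div b1, k) * C $$ (k, j div b3)
      * (B $$ (i mod b1, t) * D $$ (t, j mod b3)))"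
    by (rule sum_lessThan_mult_div_mod)
  also have "\<dots> = (A * C) $$ (i div b1, j div b3) * (B * D) $$ (i mod b1, j mod b3)"
    using A B C D lt by (simp add: scalar_prod_def lessThan_atLeast0 sum_product)
  also have "\<dots> = kron (A * C) (B * D) $$ (i, j)"
    using A B C D ij by (simp add: index_kron[of _ a1 a3 _ b1 b3])
  finally show "(kron A B * kron C D) $$ (i, j) = kron (A * C) (B * D) $$ (i, j)" .
qed (use A B C D in \<open>auto simp: kron_def\<close>)

lemma gram_mat_symmetric:
  fixes D :: "'a::comm_semiring_0 mat"
  assumes "D \<in> carrier_mat n k"
  shows "transpose_mat (D * transpose_mat D) = D * transpose_mat D"
  using assms by (simp add: transpose_mult[of D n k "transpose_mat D" n])

lemma scalar_prod_self_nonneg: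
  fixes x :: "real vec"
  shows "0 \<le> x \<bullet> x"
  by (simp add: scalar_prod_def sum_nonneg)

lemma gram_mat_psd:
  fixes D :: "real mat"
  assumes D: "D \<in> carrier_mat n k" and x: "x \<in> carrier_vec n"
  shows "0 \<le> x \<bullet> ((D * transpose_mat D) *\<^sub>v x)"
proof -
  have y: "transpose_mat D *\<^sub>v x \<in> carrier_vec k" using D x by simp
  have "x \<bullet> ((D * transpose_mat D) *\<^sub>v x) = x \<bullet> (D *\<^sub>v (transpose_mat D *\<^sub>v x))"
    using D x by (simp add: assoc_mult_mat_vec[of D n k "transpose_mat D" n])
  also have "\<dots> = (transpose_mat D *\<^sub>v x) \<bullet> (transpose_mat D *\<^sub>v x)"
    by (rule transpose_vec_mult_scalar[OF D y x, symmetric])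
  finally show ?thesis using scalar_prod_self_nonneg by simp
qed

lemma minv_mat:
  fixes A :: "real mat"
  assumes A: "A \<in> carrier_mat n n" and inv: "invertible_mat A"
  shows "minv A \<in> carrier_mat n n" "A * minv A = 1\<^sub>m n" "minv A * A = 1\<^sub>m n"
proof -
  obtain B where AB: "A * B = 1\<^sub>m (dim_row A)" and BA: "B * A = 1\<^sub>m (dim_row B)"
    using inv unfolding invertible_mat_def inverts_mat_def by blast
  have "dim_col B = n" using arg_cong[OF AB, of dim_col] A by simp
  moreover have "dim_row B = n" using arg_cong[OF BA, of dim_col] A by simp
  ultimately have B: "B \<in> carrier_mat n n" by auto
  have "A \<in> Units (ring_mat TYPE(real) n ())"
    unfolding Units_def ring_mat_def using A B AB BA by auto
  then obtain G where "mat_inverse A = Some G" using mat_inverse(1)[OF A] by fastforce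
  then show "minv A \<in> carrier_mat n n" "A * minv A = 1\<^sub>m n" "minv A * A = 1\<^sub>m n"
    using mat_inverse(2)[OF A] unfolding minv_def by auto
qed

lemma transpose_minv_symmetric:
  fixes A :: "real mat"
  assumes A: "A \<in> carrier_mat n n" and inv: "invertible_mat A" and sym: "transpose_mat A = A"
  shows "transpose_mat (minv A) = minv A"
proof -
  let ?G = "minv A"
  note G = minv_mat[OF A inv]
  have "transpose_mat ?G * A = transpose_mat (A * ?G)"
    using transpose_mult[OF A G(1)] sym by simp
  then have tGA: "transpose_mat ?G * A = 1\<^sub>m n" using G(2) by simp
  have "transpose_mat ?G = transpose_mat ?G * (A * ?G)" using G by simp
  also have "\<dots> = (transpose_mat ?G * A) * ?G" using A G(1) by simp
  also have "\<dots> = ?G" using tGA G(1) by simp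
  finally show ?thesis .
qed

lemma mtrace_smult:
  assumes "A \<in> carrier_mat n n"
  shows "mtrace (a \<cdot>\<^sub>m A) = a * mtrace A"
  unfolding mtrace_def sum_distrib_left using assms by (intro sum.cong) auto

lemma mtrace_gram_pos:
  fixes B :: "real mat"
  assumes B: "B \<in> carrier_mat k n" and nonzero: "transpose_mat B * B \<noteq> 0\<^sub>m n n"
  shows "mtrace (transpose_mat B * B) > 0"
proof -
  have tr: "mtrace (transpose_mat B * B) = (\<Sum>i<n. \<Sum>j<k. (B $$ (j, i))\<^sup>2)"
    using B by (simp add: mtrace_def scalar_prod_def lessThan_atLeast0 power2_eq_square)
  have "\<exists>i<n. \<exists>j<k. B $$ (j, i) \<noteq> 0"
  proof (rule ccontr)
    assume "\<not> ?thesis"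
    then have "transpose_mat B * B = 0\<^sub>m n n"
      using B by (intro eq_matI) (auto simp: scalar_prod_def)
    then show False using nonzero by contradiction
  qed
  then obtain i j where "i < n" "j < k" "B $$ (j, i) \<noteq> 0" by blast
  then have "0 < (\<Sum>j<k. (B $$ (j, i))\<^sup>2)" by (intro sum_pos2[of _ j]) auto
  also have "\<dots> \<le> (\<Sum>i<n. \<Sum>j<k. (B $$ (j, i))\<^sup>2)"
    using \<open>i < n\<close> by (intro member_le_sum sum_nonneg) auto
  finally show ?thesis unfolding tr .
qed

text \<open>With \<open>G = (R\<^sup>T R)\<^sup>-\<^sup>1\<close> one has \<open>G = G R\<^sup>T R G = (R G)\<^sup>T (R G)\<close>.\<close>

lemma mtrace_inverse_gram_pos:
  fixes R :: "real mat"
  assumes R: "R \<in> carrier_mat k n" and "n > 0" and inv: "invertible_mat (transpose_mat R * R)"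
  shows "mtrace (minv (transpose_mat R * R)) > 0"
proof -
  let ?A = "transpose_mat R * R" and ?G = "minv (transpose_mat R * R)"
  have A: "?A \<in> carrier_mat n n" using R by simp
  note G = minv_mat[OF A inv]
  have Gt: "transpose_mat ?G = ?G"
    using transpose_minv_symmetric[OF A inv] transpose_mult[of "transpose_mat R" n k R n] R by simp
  have RT: "transpose_mat R \<in> carrier_mat n k" using R by simp
  have "transpose_mat (R * ?G) = ?G * transpose_mat R"
    using transpose_mult[OF R G(1)] Gt by simp
  then have "transpose_mat (R * ?G) * (R * ?G) = ?G * transpose_mat R * (R * ?G)" by simp
  also have "\<dots> = ?G * (transpose_mat R * (R * ?G))"
    using G(1) RT R by (intro assoc_mult_mat[of _ n n _ k _ n]) auto
  also have "\<dots> = ?G * (?A * ?G)" using assoc_mult_mat[OF RT R G(1)] by simp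
  also have "\<dots> = ?G * ?A * ?G" using assoc_mult_mat[OF G(1) A G(1)] by simp
  also have "\<dots> = ?G" using G by simp
  finally have gram: "transpose_mat (R * ?G) * (R * ?G) = ?G" .
  have "?G \<noteq> 0\<^sub>m n n"
  proof
    assume "?G = 0\<^sub>m n n"
    then have "1\<^sub>m n = 0\<^sub>m n n * ?A" using G(3) by simp
    also have "\<dots> = 0\<^sub>m n n" using left_mult_zero_mat[OF A] .
    finally show False using \<open>n > 0\<close> by (metis index_one_mat(1) index_zero_mat(1) zero_neq_one)
  qed
  then show ?thesis using mtrace_gram_pos[of "R * ?G" k n] R G(1) gram by simp
qed

section \<open>Minimising the regularised inverse quadratic objective\<close>

lemma inverse_affine_plus_linear_ge_at_zero:
  fixes c g lam x :: real
  assumes c: "0 < c" and g: "0 < g" and lam: "0 \<le> lam" and x: "0 \<le> x" and le: "lam \<le> g * c\<^sup>2"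
  shows "1 / c \<le> 1 / (lam * x + c) + g * x"
proof -
  have u: "0 < lam * x + c" using lam x c by (simp add: add_nonneg_pos)
  have "lam * x \<le> g * c\<^sup>2 * x" using le x by (rule mult_right_mono)
  also have "\<dots> \<le> g * x * c * (lam * x + c)"
    using g x c lam by (simp add: power2_eq_square mult_left_mono mult_right_mono algebra_simps)
  finally have "0 \<le> (c + g * x * c * (lam * x + c) - (lam * x + c)) / (c * (lam * x + c))"
    using c u by (intro divide_nonneg_pos) auto
  also have "\<dots> = 1 / (lam * x + c) + g * x - 1 / c"
    using c u by (simp add: field_simps)
  finally show ?thesis by simp
qed

text \<open>The stationary point \<open>s\<close> of \<open>x \<mapsto> 1 / (lam x + c) + g x\<close> satisfies \<open>lam s + c = w\<close> with
  \<open>w = sqrt (lam / g)\<close>; the claim then reduces to \<open>2 u w \<le> u\<^sup>2 + w\<^sup>2\<close> for \<open>u = lam x + c\<close>.\<close>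

lemma inverse_affine_plus_linear_ge_at_stationary:
  fixes c g lam x :: real
  assumes c: "0 < c" and g: "0 < g" and gt: "g * c\<^sup>2 < lam"
  defines "s \<equiv> 1 / sqrt (g * lam) - c / lam"
  shows "0 \<le> s" and "0 \<le> x \<Longrightarrow> 1 / (lam * s + c) + g * s \<le> 1 / (lam * x + c) + g * x"
proof -
  have "0 < g * c\<^sup>2" using g c by simp
  then have lam: "0 < lam" using gt by linarith
  define w where "w = sqrt (lam / g)"
  have w: "0 < w" unfolding w_def using lam g by simp
  have lamw: "lam = g * w\<^sup>2" unfolding w_def using lam g by simp
  have "sqrt (g * lam) = g * w" unfolding lamw using g w by (simp add: power2_eq_square real_sqrt_mult)
  then have s: "s = (w - c) / (g * w\<^sup>2)"
    unfolding s_def lamw using g w by (simp add: field_simps power2_eq_square)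
  have "g * c\<^sup>2 < g * w\<^sup>2" using gt lamw by simp
  then have "c < w" using g w c by (simp add: power_less_imp_less_base)
  then show "0 \<le> s" unfolding s using g w by simp
  assume x: "0 \<le> x"
  have "1 / (lam * s + c) + g * s = 2 / w - c / w\<^sup>2"
    unfolding s lamw using g w by (simp add: field_simps power2_eq_square)
  also have "\<dots> \<le> 1 / (lam * x + c) + (lam * x + c - c) / w\<^sup>2"
  proof -
    define u where "u = lam * x + c"
    have u: "0 < u" unfolding u_def using lam x c by (simp add: add_nonneg_pos)
    have "2 * u * w \<le> w\<^sup>2 + u\<^sup>2" using sum_squares_bound[of u w] by (simp add: algebra_simps)
    then have "2 * u * w / (u * w\<^sup>2) \<le> (w\<^sup>2 + u\<^sup>2) / (u * w\<^sup>2)"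
      using u w by (intro divide_right_mono) auto
    then show ?thesis unfolding u_def[symmetric] using u w by (simp add: field_simps power2_eq_square)
  qed
  also have "\<dots> = 1 / (lam * x + c) + g * x" unfolding lamw using g w by (simp add: field_simps)
  finally show "1 / (lam * s + c) + g * s \<le> 1 / (lam * x + c) + g * x" .
qed

lemma inverse_quadratic_plus_ridge_minimizer:
  fixes M :: "real mat" and c g lam :: real and v :: "real vec"
  assumes M: "M \<in> carrier_mat n n" and sym: "transpose_mat M = M"
    and psd: "\<And>l. l \<in> carrier_vec n \<Longrightarrow> 0 \<le> l \<bullet> (M *\<^sub>v l)"
    and c: "0 < c" and g: "0 < g"
    and lam_max: "\<And>mu. eigenvalue M mu \<Longrightarrow> mu \<le> lam"
    and v: "eigenvector M v lam" and v_unit: "v \<bullet> v = 1"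
  defines "J \<equiv> \<lambda>l. 1 / (l \<bullet> (M *\<^sub>v l) + c) + g * (l \<bullet> l)"
    and "lstar \<equiv> if lam \<le> g * c\<^sup>2 then 0\<^sub>v n else sqrt (1 / sqrt (g * lam) - c / lam) \<cdot>\<^sub>v v"
  shows "lstar \<in> carrier_vec n" and "\<forall>l \<in> carrier_vec n. J lstar \<le> J l"
proof -
  have vc: "v \<in> carrier_vec n" and Mv: "M *\<^sub>v v = lam \<cdot>\<^sub>v v"
    using v M unfolding eigenvector_def by auto
  then show "lstar \<in> carrier_vec n" unfolding lstar_def by simp
  have lam: "0 \<le> lam" using psd[OF vc] Mv v_unit vc by simp
  show "\<forall>l \<in> carrier_vec n. J lstar \<le> J l"
  proof
    fix l :: "real vec" assume l: "l \<in> carrier_vec n"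
    have "l \<bullet> (M *\<^sub>v l) \<le> lam * (l \<bullet> l)"
      using M sym lam_max l by (rule quadratic_form_le_max_eigenvalue)
    then have J_ge: "1 / (lam * (l \<bullet> l) + c) + g * (l \<bullet> l) \<le> J l"
      unfolding J_def using psd[OF l] c by (simp add: divide_left_mono add_pos_nonneg)
    show "J lstar \<le> J l"
    proof (cases "lam \<le> g * c\<^sup>2")
      case True
      then have "J lstar = 1 / c" unfolding J_def lstar_def using M by simp
      then show ?thesis
        using J_ge inverse_affine_plus_linear_ge_at_zero[OF c g lam scalar_prod_self_nonneg[of l] True]
        by linarith
    next
      case False
      then have gt: "g * c\<^sup>2 < lam" by simp
      define s where "s = 1 / sqrt (g * lam) - c / lam"
      note stationary = inverse_affine_plus_linear_ge_at_stationary[OF c g gt, folded s_def]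
      have "0 \<le> s" by (rule stationary(1))
      then have "J lstar = 1 / (lam * s + c) + g * s"
        unfolding J_def lstar_def s_def[symmetric] using False M vc Mv v_unit
        by (simp add: mult_mat_vec power2_eq_square[symmetric])
      then show ?thesis using J_ge stationary(2)[OF scalar_prod_self_nonneg[of l]] by linarith
    qed
  qed
qed

section \<open>The identification problem\<close>

lemma Rmat_carrier: "Rmat N nh r \<in> carrier_mat N nh"
  unfolding Rmat_def by simp

lemma Emat_eq_gram:
  assumes inv: "invertible_mat (transpose_mat (Rmat N nh r) * Rmat N nh r)"
  defines "B \<equiv> Rmat N nh r * minv (transpose_mat (Rmat N nh r) * Rmat N nh r)"
  shows "Emat N nh r = B * transpose_mat B"
proof -
  let ?R = "Rmat N nh r"
  let ?A = "transpose_mat ?R * ?R" and ?G = "minv (transpose_mat ?R * ?R)"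
  have R: "?R \<in> carrier_mat N nh" by (rule Rmat_carrier)
  have A: "?A \<in> carrier_mat nh nh" using R by simp
  have RT: "transpose_mat ?R \<in> carrier_mat nh N" using R by simp
  note G = minv_mat[OF A inv]
  have Gt: "transpose_mat ?G = ?G"
    using transpose_minv_symmetric[OF A inv] transpose_mult[of "transpose_mat ?R" nh N ?R nh] R by simp
  have "transpose_mat B = ?G * transpose_mat ?R"
    unfolding B_def using transpose_mult[OF R G(1)] Gt by simp
  then have "B * transpose_mat B = ?R * ?G * (?G * transpose_mat ?R)" unfolding B_def by simp
  also have "\<dots> = ?R * (?G * (?G * transpose_mat ?R))"
    using assoc_mult_mat[OF R G(1), of "?G * transpose_mat ?R" N] G(1) RT by simp
  also have "\<dots> = ?R * (?G * ?G) * transpose_mat ?R"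
    using assoc_mult_mat[OF G(1) G(1) RT] assoc_mult_mat[OF R, of "?G * ?G" nh "transpose_mat ?R" N] G(1) RT
    by simp
  finally show ?thesis unfolding Emat_def Let_def by simp
qed

lemma Mmat_eq_gram:
  assumes inv: "invertible_mat (transpose_mat (Rmat N nh r) * Rmat N nh r)"
    and Q: "Q \<in> carrier_mat (N * (N + nl - 1)) nl"
  obtains D k where "D \<in> carrier_mat nl k" "Mmat N nh nl r Q = D * transpose_mat D"
proof -
  define m where "m = N + nl - 1"
  define B where "B = Rmat N nh r * minv (transpose_mat (Rmat N nh r) * Rmat N nh r)"
  define C where "C = kron (1\<^sub>m m) B"
  have B: "B \<in> carrier_mat N nh"
    unfolding B_def using Rmat_carrier minv_mat(1)[OF _ inv] by (metis mult_carrier_mat transpose_carrier_mat)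
  have C: "C \<in> carrier_mat (m * N) (m * nh)" unfolding C_def using B by simp
  have QT: "transpose_mat Q \<in> carrier_mat nl (m * N)" using Q unfolding m_def by (simp add: mult.commute)
  have "kron (1\<^sub>m m) (Emat N nh r) = kron (1\<^sub>m m * 1\<^sub>m m) (B * transpose_mat B)"
    using Emat_eq_gram[OF inv] unfolding B_def by simp
  also have "\<dots> = C * kron (1\<^sub>m m) (transpose_mat B)"
    unfolding C_def using B by (intro kron_mult[symmetric]) auto
  also have "\<dots> = C * transpose_mat C"
    unfolding C_def using transpose_kron[of "1\<^sub>m m" m m B N nh] B by simp
  finally have K: "kron (1\<^sub>m m) (Emat N nh r) = C * transpose_mat C" .
  have "Mmat N nh nl r Q = transpose_mat Q * (C * transpose_mat C) * Q"
    unfolding Mmat_def K[unfolded m_def] m_def ..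
  also have "\<dots> = (transpose_mat Q * C) * (transpose_mat C * Q)"
  proof -
    have Q': "Q \<in> carrier_mat (m * N) nl" using Q unfolding m_def by (simp add: mult.commute)
    have CT: "transpose_mat C \<in> carrier_mat (m * nh) (m * N)" using C by simp
    show ?thesis
      using assoc_mult_mat[OF QT _ Q', of "C * transpose_mat C"] assoc_mult_mat[OF C CT Q']
        assoc_mult_mat[OF QT C, of "transpose_mat C * Q" nl] C CT Q' by simp
  qed
  also have "transpose_mat C * Q = transpose_mat (transpose_mat Q * C)"
    using transpose_mult[OF QT C] by simp
  finally have "Mmat N nh nl r Q = (transpose_mat Q * C) * transpose_mat (transpose_mat Q * C)" .
  moreover have "transpose_mat Q * C \<in> carrier_mat nl (m * nh)" using QT C by simp
  ultimately show thesis by (rule that[rotated])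
qed

theorem theorem2:
  fixes N nh nl :: nat and r :: "real vec" and sigma2 gamma2 lam1 :: real
    and Q :: "real mat" and v1 :: "real vec"
  assumes "N > 0" and "nh > 0" and "nl > 0"
    and r: "r \<in> carrier_vec N"
    and invR: "invertible_mat (transpose_mat (Rmat N nh r) * Rmat N nh r)"
    and "sigma2 > 0"
    and Q: "Q \<in> carrier_mat (N * (N + nl - 1)) nl"
    and Q01: "\<forall>i j. i < N * (N + nl - 1) \<longrightarrow> j < nl \<longrightarrow> Q $$ (i, j) = 0 \<or> Q $$ (i, j) = 1"
    and Qvec: "\<forall>l \<in> carrier_vec nl. vec_cs (Lmat N nl l) = Q *\<^sub>v l"
    and "gamma2 > 0"
    and lam1: "eigenvalue (Mmat N nh nl r Q) lam1"
    and lam1_max: "\<forall>mu. eigenvalue (Mmat N nh nl r Q) mu \<longrightarrow> mu \<le> lam1"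
    and v1: "eigenvector (Mmat N nh nl r Q) v1 lam1"
    and v1_unit: "v1 \<bullet> v1 = 1"
  shows
    "let M = Mmat N nh nl r Q;
         c = mtrace (sigma2 \<cdot>\<^sub>m minv (transpose_mat (Rmat N nh r) * Rmat N nh r));
         J = (\<lambda>l. 1 / (l \<bullet> (M *\<^sub>v l) + c) + gamma2 * (l \<bullet> l));
         lstar = (if lam1 \<le> gamma2 * c\<^sup>2 then 0\<^sub>v nl
                  else sqrt (1 / sqrt (gamma2 * lam1) - c / lam1) \<cdot>\<^sub>v v1)
     in lstar \<in> carrier_vec nl \<and> (\<forall>l \<in> carrier_vec nl. J lstar \<le> J l)"
proof -
  let ?M = "Mmat N nh nl r Q" and ?R = "Rmat N nh r"
  obtain D k where D: "D \<in> carrier_mat nl k" and M: "?M = D * transpose_mat D"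
    using Mmat_eq_gram[OF invR Q] by blast
  have carrier: "?M \<in> carrier_mat nl nl" using D M by simp
  have sym: "transpose_mat ?M = ?M" using gram_mat_symmetric[OF D] M by simp
  have psd: "0 \<le> l \<bullet> (?M *\<^sub>v l)" if "l \<in> carrier_vec nl" for l
    using gram_mat_psd[OF D that] M by simp
  have "minv (transpose_mat ?R * ?R) \<in> carrier_mat nh nh"
    using minv_mat(1)[OF _ invR] Rmat_carrier by (metis mult_carrier_mat transpose_carrier_mat)
  then have c: "0 < mtrace (sigma2 \<cdot>\<^sub>m minv (transpose_mat ?R * ?R))"
    using mtrace_inverse_gram_pos[OF Rmat_carrier \<open>nh > 0\<close> invR] \<open>sigma2 > 0\<close>
    by (simp add: mtrace_smult)
  have "\<And>mu. eigenvalue ?M mu \<Longrightarrow> mu \<le> lam1" using lam1_max by blast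
  note minimizer = inverse_quadratic_plus_ridge_minimizer[OF carrier sym psd c \<open>gamma2 > 0\<close> this v1 v1_unit]
  show ?thesis unfolding Let_def by (intro conjI minimizer)
qed

end
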